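(* Let $m\in\mathbb{R}$, $b\in(0,1)$, $q\in[0,1)$. Let $L\sim \mathrm{DLap}(b)$ with pmf $p_L(x)=\frac{1-b}{1+b}b^{|x|}$ for $x\in\mathbb{Z}$, let $U\sim\mathrm{Unif}(-1/2,1/2)$, let $G_1,G_2\overset{\text{iid}}{\sim}\mathrm{Geom}(1-b)$ with pmf $p_{G_1}(x)=b^x(1-b)$ for $x\in\{0,1,2,\ldots\}$, and let $N_0\sim\mathrm{Tulap}(m,b,0)$. Then: (1) $L+U+m\overset{d}{=}G_1-G_2+U+m\overset{d}{=}N_0$. (2) Let $N$ be the output of the following sampling procedure with inputs $m,b,q$: (i) draw $G_1,G_2\overset{\text{iid}}{\sim}\mathrm{Geom}(1-b)$ and $U\sim\mathrm{Unif}(-1/2,1/2)$; (ii) set $N=G_1-G_2+U+m$; (iii) if $F_{N_0}(N)<q/2$ or $F_{N_0}(N)>1-q/2$ (where $N_0\sim\mathrm{Tulap}(m,b,0)$), return to step (i); otherwise output $N$. Then $N\sim\mathrm{Tulap}(m,b,q)$. (3) A random variable $N\sim\mathrm{Tulap}(m,b,q)$ is continuous and symmetric about $m$.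
   Context: $[\cdot]:\mathbb{R}\to\mathbb{Z}$ denotes the nearest integer function, with $[z+1/2]$ taken to be the nearest even integer when $z\in\mathbb{Z}$. For $m\in\mathbb{R}$, $b\in(0,1)$, $q\in[0,1)$, the Truncated-Uniform-Laplace distribution is defined as follows: $N_0\sim\mathrm{Tulap}(m,b,0)$ has cdf $F_{N_0}(x)=\frac{b^{-[x-m]}}{1+b}\left(b+(x-m-[x-m]+\tfrac12)(1-b)\right)$ for $x\le[m]$ and $F_{N_0}(x)=1-\frac{b^{[x-m]}}{1+b}\left(b+([x-m]-(x-m)+\tfrac12)(1-b)\right)$ for $x>[m]$; and $N\sim\mathrm{Tulap}(m,b,q)$ has cdf $F_N(x)=\left(\frac{F_{N_0}(x)-q/2}{1-q}\right)I\{q/2\le F_{N_0}(x)\le 1-q/2\}+I\{F_{N_0}(x)>1-q/2\}$. *)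

theory Defs
  imports "HOL-Probability.Probability"
begin

definition nint :: "real \<Rightarrow> int" where
  "nint z = (if z - of_int \<lfloor>z\<rfloor> = 1/2
             then (if even \<lfloor>z\<rfloor> then \<lfloor>z\<rfloor> else \<lfloor>z\<rfloor> + 1)
             else round z)"

definition tulap0_cdf :: "real \<Rightarrow> real \<Rightarrow> real \<Rightarrow> real" where
  "tulap0_cdf m b x =
     (if x \<le> of_int (nint m)
      then b powi (- nint (x - m)) / (1 + b) * (b + (x - m - of_int (nint (x - m)) + 1/2) * (1 - b))
      else 1 - b powi (nint (x - m)) / (1 + b) * (b + (of_int (nint (x - m)) - (x - m) + 1/2) * (1 - b)))"

definition tulap_cdf :: "real \<Rightarrow> real \<Rightarrow> real \<Rightarrow> real \<Rightarrow> real" where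
  "tulap_cdf m b q x =
     (let F0 = tulap0_cdf m b x in
      (if q/2 \<le> F0 \<and> F0 \<le> 1 - q/2 then (F0 - q/2) / (1 - q) else 0)
      + (if F0 > 1 - q/2 then 1 else 0))"

definition dlap_pmf :: "real \<Rightarrow> int pmf" where
  "dlap_pmf b = embed_pmf (\<lambda>x. (1 - b) / (1 + b) * b ^ nat \<bar>x\<bar>)"

definition geom_pmf :: "real \<Rightarrow> nat pmf" where
  "geom_pmf b = geometric_pmf (1 - b)"

definition unif_half :: "real measure" where
  "unif_half = uniform_measure lborel {-1/2<..<1/2}"

definition trial_measure :: "real \<Rightarrow> (nat \<times> nat \<times> real) measure" where
  "trial_measure b = measure_pmf (geom_pmf b) \<Otimes>\<^sub>M (measure_pmf (geom_pmf b) \<Otimes>\<^sub>M unif_half)"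

end

theory Submission
  imports Defs
begin

text \<open>Summing the joint pmf of two independent Geom(1-b) variables along the diagonals
  \<open>g1 - g2 = k\<close> gives the DLap(b) pmf, so \<open>L + U + m\<close> and \<open>G1 - G2 + U + m\<close> have the same law.
  Conditioning on the integer part, the cdf of \<open>L + U + m\<close> at \<open>m + k + t\<close> (\<open>\<bar>t\<bar> \<le> 1/2\<close>) is
  \<open>P(L \<le> k - 1) + (t + 1/2) P(L = k)\<close>, which is the closed form \<open>F\<close> of the Tulap(m,b,0) cdf; being a
  cdf of an atomless law that is affine with positive slope on every cell, \<open>F\<close> is continuous and
  strictly increasing, and the symmetry of DLap gives \<open>F(2m - x) = 1 - F(x)\<close>.
  The sampler outputs the first of i.i.d. trials that lands in \<open>A = F\<^sup>-\<^sup>1[q/2, 1 - q/2]\<close>, a set of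
  probability \<open>1 - q\<close>: the first success is at trial \<open>k\<close> with probability \<open>q\<^sup>k (1 - q)\<close>, so the output
  has the trial law conditioned on \<open>A\<close>, whose cdf is \<open>(F(x) - q/2) / (1 - q)\<close> clipped to \<open>[0, 1]\<close>.
  A law with continuous cdf satisfying \<open>F(2m - x) = 1 - F(x)\<close> is invariant under \<open>x \<mapsto> 2m - x\<close>.\<close>

lemma Least_eq_iff_first:
  fixes P :: "nat \<Rightarrow> bool"
  assumes "\<exists>k. P k"
  shows "(LEAST k. P k) = k \<longleftrightarrow> P k \<and> (\<forall>j<k. \<not> P j)"
proof
  assume "(LEAST k. P k) = k"
  then show "P k \<and> (\<forall>j<k. \<not> P j)" using LeastI_ex[OF assms] not_less_Least by blast
next
  assume "P k \<and> (\<forall>j<k. \<not> P j)"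
  then show "(LEAST k. P k) = k" by (intro Least_equality) (auto simp flip: not_less)
qed

lemma emeasure_distr_measure_pmf_pair:
  assumes "sigma_finite_measure N" and g: "g \<in> measurable (measure_pmf D \<Otimes>\<^sub>M N) K"
    and S: "S \<in> sets K"
  shows "emeasure (distr (measure_pmf D \<Otimes>\<^sub>M N) K g) S
       = (\<integral>\<^sup>+ x. emeasure N {y \<in> space N. g (x, y) \<in> S} \<partial>measure_pmf D)"
proof -
  interpret N: sigma_finite_measure N by fact
  have "g -` S \<inter> space (measure_pmf D \<Otimes>\<^sub>M N) \<in> sets (measure_pmf D \<Otimes>\<^sub>M N)"
    using g S by measurable
  then show ?thesis
    using g S by (simp add: emeasure_distr N.emeasure_pair_measure_alt space_pair_measure vimage_def conj_commute)
qed

lemma cdf_distr_reflect: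
  assumes "real_distribution \<nu>" and atomless: "\<And>x. measure \<nu> {x} = 0"
  shows "cdf (distr \<nu> borel (\<lambda>y. c - y)) x = 1 - cdf \<nu> (c - x)"
proof -
  interpret real_distribution \<nu> by fact
  have "cdf (distr \<nu> borel (\<lambda>y. c - y)) x = measure \<nu> (UNIV - {..<c - x})"
    unfolding cdf_def2 by (subst measure_distr) (auto intro!: arg_cong[where f="measure \<nu>"])
  also have "\<dots> = 1 - measure \<nu> {..<c - x}"
    using prob_compl[of "{..<c - x}"] by simp
  also have "measure \<nu> {..<c - x} = measure \<nu> {..c - x}"
    using finite_measure_Union[of "{..<c - x}" "{c - x}"] atomless by (simp add: ivl_disj_un(2)[symmetric])
  finally show ?thesis unfolding cdf_def2 .
qed

lemma distr_reflect_eq_if_cdf_reflect: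
  assumes \<nu>: "real_distribution \<nu>" and cont: "\<And>x. isCont (cdf \<nu>) x"
    and reflect: "\<And>x. cdf \<nu> (c - x) = 1 - cdf \<nu> x"
  shows "distr \<nu> borel (\<lambda>y. c - y) = \<nu>"
proof (rule cdf_unique)
  interpret real_distribution \<nu> by fact
  show "real_distribution (distr \<nu> borel (\<lambda>y. c - y))" by simp
  have "measure \<nu> {x} = 0" for x using cont isCont_cdf by blast
  then show "cdf (distr \<nu> borel (\<lambda>y. c - y)) = cdf \<nu>"
    by (intro ext) (simp add: cdf_distr_reflect[OF \<nu>] reflect)
qed fact

lemma measure_atLeastAtMost_eq_cdf_diff:
  assumes "real_distribution \<nu>" "measure \<nu> {a} = 0" "a \<le> z"
  shows "measure \<nu> {a..z} = cdf \<nu> z - cdf \<nu> a"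
proof -
  interpret real_distribution \<nu> by fact
  have "measure \<nu> ({a} \<union> {a<..z}) = measure \<nu> {a} + measure \<nu> {a<..z}"
    by (rule finite_measure_Union) auto
  moreover have "{a} \<union> {a<..z} = {a..z}" using assms(3) by auto
  moreover have "measure \<nu> {a<..z} = cdf \<nu> z - cdf \<nu> a"
    using cdf_diff_eq[of a z] assms(3) by (cases "a = z") auto
  ultimately show ?thesis using assms(2) by simp
qed

locale iid_trials = prob_space M
  for M :: "'a measure" and T :: "'t measure" and Z :: "nat \<Rightarrow> 'a \<Rightarrow> 't" +
  assumes indep_trials: "indep_vars (\<lambda>_. T) Z UNIV"
    and distr_trial: "\<And>k. distr M T (Z k) = T"
begin

lemma measurable_trial [measurable]: "Z k \<in> measurable M T"
  using indep_trials unfolding indep_vars_def by auto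

lemma prob_space_trial: "prob_space T"
  using prob_space_distr[OF measurable_trial[of 0]] distr_trial[of 0] by simp

lemma prob_trials:
  assumes "finite I" "I \<noteq> {}" "\<And>j. j \<in> I \<Longrightarrow> B j \<in> sets T"
  shows "prob (\<Inter>j\<in>I. Z j -` B j \<inter> space M) = (\<Prod>j\<in>I. measure T (B j))"
proof -
  have "prob (\<Inter>j\<in>I. Z j -` B j \<inter> space M) = (\<Prod>j\<in>I. prob (Z j -` B j \<inter> space M))"
    using assms by (intro indep_varsD[OF indep_trials]) auto
  also have "\<dots> = (\<Prod>j\<in>I. measure T (B j))"
    using assms by (intro prod.cong refl) (metis measure_distr measurable_trial distr_trial)
  finally show ?thesis .
qed

context
  fixes A :: "'t set"
  assumes A: "A \<in> sets T" "0 < measure T A"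
begin

lemma prob_rejected_until:
  assumes C: "C \<in> sets T"
  shows "prob {\<omega> \<in> space M. (\<forall>j<k. Z j \<omega> \<notin> A) \<and> Z k \<omega> \<in> C}
       = (1 - measure T A) ^ k * measure T C"
proof -
  interpret T: prob_space T by (rule prob_space_trial)
  define B where "B j = (if j < k then space T - A else C)" for j
  have "{\<omega> \<in> space M. (\<forall>j<k. Z j \<omega> \<notin> A) \<and> Z k \<omega> \<in> C}
      = (\<Inter>j\<in>{..<Suc k}. Z j -` B j \<inter> space M)"
    using measurable_space[OF measurable_trial] by (auto simp: B_def lessThan_Suc)
  also have "prob \<dots> = (\<Prod>j\<in>{..<Suc k}. measure T (B j))"
    using A C by (intro prob_trials) (auto simp: B_def)
  also have "\<dots> = (\<Prod>j<k. measure T (space T - A)) * measure T C"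
    by (simp add: B_def)
  finally show ?thesis
    using A by (simp add: T.prob_compl)
qed

lemma AE_eventually_accepted: "AE \<omega> in M. \<exists>k. Z k \<omega> \<in> A"
proof (rule AE_I)
  interpret T: prob_space T by (rule prob_space_trial)
  let ?never = "{\<omega> \<in> space M. \<forall>k. Z k \<omega> \<notin> A}"
  have [measurable]: "A \<in> sets T" by (rule A(1))
  show "?never \<in> events" by measurable
  have "prob ?never \<le> (1 - measure T A) ^ Suc k" for k
  proof -
    have "prob ?never \<le> prob {\<omega> \<in> space M. (\<forall>j<k. Z j \<omega> \<notin> A) \<and> Z k \<omega> \<in> space T - A}"
      using measurable_space[OF measurable_trial] by (intro finite_measure_mono) auto
    also have "\<dots> = (1 - measure T A) ^ Suc k"
      using prob_rejected_until[of "space T - A" k] A by (simp add: T.prob_compl)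
    finally show ?thesis .
  qed
  moreover have "(\<lambda>k. (1 - measure T A) ^ Suc k) \<longlonglongrightarrow> 0"
    using A T.prob_le_1[of A]
    by (intro LIMSEQ_Suc[OF LIMSEQ_power_zero]) auto
  ultimately have "prob ?never \<le> 0"
    by (intro LIMSEQ_le_const[where X="\<lambda>k. (1 - measure T A) ^ Suc k"]) auto
  then show "emeasure M ?never = 0"
    by (simp add: emeasure_eq_measure antisym)
qed auto

lemma measurable_first_accepted [measurable]: "(\<lambda>\<omega>. Z (LEAST k. Z k \<omega> \<in> A) \<omega>) \<in> measurable M T"
proof -
  have [measurable]: "A \<in> sets T" by (rule A(1))
  show ?thesis
    by (rule measurable_compose_countable'[where I=UNIV]) (auto intro: measurable_Least)
qed

lemma prob_first_accepted:
  assumes S: "S \<in> sets T"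
  shows "prob {\<omega> \<in> space M. Z (LEAST k. Z k \<omega> \<in> A) \<omega> \<in> S} = measure T (A \<inter> S) / measure T A"
proof -
  have [measurable]: "A \<in> sets T" "S \<in> sets T" by (fact A(1) S)+
  define E where "E k = {\<omega> \<in> space M. (\<forall>j<k. Z j \<omega> \<notin> A) \<and> Z k \<omega> \<in> A \<inter> S}" for k
  have E_sets [measurable]: "E k \<in> events" for k unfolding E_def by measurable
  have E_first: "\<omega> \<in> E k \<longleftrightarrow> \<omega> \<in> space M \<and> (LEAST k. Z k \<omega> \<in> A) = k \<and> Z k \<omega> \<in> S"
    if "\<exists>k. Z k \<omega> \<in> A" for \<omega> k
    using Least_eq_iff_first[OF that, of k] unfolding E_def by blast
  have "prob {\<omega> \<in> space M. Z (LEAST k. Z k \<omega> \<in> A) \<omega> \<in> S} = prob (\<Union>k. E k)"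
  proof (rule measure_eq_AE)
    show "AE \<omega> in M. (\<omega> \<in> {\<omega> \<in> space M. Z (LEAST k. Z k \<omega> \<in> A) \<omega> \<in> S}) = (\<omega> \<in> (\<Union>k. E k))"
      using AE_eventually_accepted by eventually_elim (auto simp: E_first)
  qed (auto simp: E_sets)
  moreover have "(\<lambda>k. prob (E k)) sums prob (\<Union>k. E k)"
  proof (rule finite_measure_UNION)
    show "disjoint_family E"
      unfolding disjoint_family_on_def
    proof (intro ballI impI)
      fix i j :: nat
      assume "i \<noteq> j"
      then show "E i \<inter> E j = {}"
        by (cases i j rule: linorder_cases) (auto simp: E_def)
    qed
  qed auto
  moreover have "(\<lambda>k. prob (E k)) sums (measure T (A \<inter> S) / measure T A)"
  proof -
    have "prob (E k) = (1 - measure T A) ^ k * measure T (A \<inter> S)" for k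
      unfolding E_def using A S by (intro prob_rejected_until) auto
    moreover have "(\<lambda>k. (1 - measure T A) ^ k * measure T (A \<inter> S)) sums (1 / (1 - (1 - measure T A)) * measure T (A \<inter> S))"
      using A prob_space.prob_le_1[OF prob_space_trial, of A]
      by (intro sums_mult2 geometric_sums) auto
    ultimately show ?thesis by simp
  qed
  ultimately show ?thesis by (simp add: sums_unique2)
qed

end

end

lemma abs_sub_nint_le: "\<bar>y - real_of_int (nint y)\<bar> \<le> 1/2"
proof (cases "y - of_int \<lfloor>y\<rfloor> = 1/2")
  case True
  then show ?thesis unfolding nint_def by auto
next
  case False
  have "\<bar>y - of_int (round y)\<bar> \<le> 1/2"
    using of_int_round_ge[of y] of_int_round_le[of y] by linarith
  then show ?thesis using False unfolding nint_def by auto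
qed

text \<open>\<open>tulap0_cell b k t\<close> is \<open>tulap0_cdf m b\<close> at \<open>m + k + t\<close>, \<open>\<bar>t\<bar> \<le> 1/2\<close>, with the branch decided
  by \<open>k\<close> instead of by comparing with \<open>nint m\<close>; the cells overlap at half-integers, where both
  neighbouring formulas agree.\<close>
definition tulap0_cell :: "real \<Rightarrow> int \<Rightarrow> real \<Rightarrow> real" where
  "tulap0_cell b k t = (if k \<le> 0 then b powi (-k) / (1+b) * (b + (t + 1/2)*(1-b))
                        else 1 - b powi k / (1+b) * (b + (1/2 - t)*(1-b)))"

lemma tulap0_cell_succ:
  assumes "0 < b"
  shows "tulap0_cell b (k+1) (-1/2) = tulap0_cell b k (1/2)"
proof -
  have "b \<noteq> 0" using assms by simp
  consider "k + 1 \<le> 0" | "k = 0" | "k > 0" by linarith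
  then show ?thesis
  proof cases
    case 1
    have "b powi (-k) = b * b powi (-(k+1))"
      using \<open>b \<noteq> 0\<close> by (simp add: power_int_add flip: power_int_add_1')
    with 1 show ?thesis unfolding tulap0_cell_def by (simp add: field_simps)
  next
    case 2
    then show ?thesis unfolding tulap0_cell_def using assms by (simp add: field_simps)
  next
    case 3
    then have "b powi (k+1) = b * b powi k"
      using \<open>b \<noteq> 0\<close> by (simp add: power_int_add algebra_simps)
    with 3 show ?thesis unfolding tulap0_cell_def using assms by (simp add: field_simps)
  qed
qed

lemma tulap0_cell_unique:
  assumes "0 < b" "\<bar>y - of_int j\<bar> \<le> 1/2" "\<bar>y - of_int k\<bar> \<le> 1/2"
  shows "tulap0_cell b j (y - of_int j) = tulap0_cell b k (y - of_int k)"
proof -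
  have succ: "tulap0_cell b (i+1) (y - of_int (i+1)) = tulap0_cell b i (y - of_int i)"
    if "y - of_int i = 1/2" for i
  proof -
    have "y - of_int (i+1) = -1/2" using that by simp
    with that show ?thesis using tulap0_cell_succ[OF assms(1), of i] by (simp only:)
  qed
  have "\<bar>of_int j - of_int k :: real\<bar> \<le> 1" using assms by linarith
  then consider "j = k" | "j = k + 1" | "k = j + 1" by linarith
  then show ?thesis
  proof cases
    case 2
    then show ?thesis using succ[of k] assms by simp
  next
    case 3
    then show ?thesis using succ[of j] assms by simp
  qed simp
qed

lemma tulap0_cdf_eq_cell_nint:
  assumes "0 < b"
  shows "tulap0_cdf m b (m + y) = tulap0_cell b (nint y) (y - of_int (nint y))"
proof (cases "m + y \<le> of_int (nint m)")
  case True
  have "nint y \<le> 0"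
  proof (rule ccontr)
    assume "\<not> nint y \<le> 0"
    then have "of_int (nint y) \<ge> (1::real)" by simp
    moreover have "y \<le> 1/2" using True abs_sub_nint_le[of m] by linarith
    moreover have "y \<ge> of_int (nint y) - 1/2" using abs_sub_nint_le[of y] by linarith
    ultimately have "y = 1/2" "nint y = 1" by linarith+
    moreover have "nint (1/2) = 0" by (simp add: nint_def)
    ultimately show False by (metis zero_neq_one)
  qed
  then show ?thesis using True unfolding tulap0_cdf_def tulap0_cell_def by simp
next
  case False
  have "nint y \<ge> 0"
    using False abs_sub_nint_le[of m] abs_sub_nint_le[of y] by linarith
  then show ?thesis
  proof (cases "nint y = 0")
    case True
    then show ?thesis
      using False assms unfolding tulap0_cdf_def tulap0_cell_def by (simp add: field_simps)
  qed (use False in \<open>simp add: tulap0_cdf_def tulap0_cell_def\<close>)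
qed

lemma tulap0_cdf_eq_cell:
  assumes "0 < b" "\<bar>y - of_int k\<bar> \<le> 1/2"
  shows "tulap0_cdf m b (m + y) = tulap0_cell b k (y - of_int k)"
  using tulap0_cdf_eq_cell_nint[OF assms(1)] tulap0_cell_unique[OF assms(1) abs_sub_nint_le assms(2)]
  by simp

lemma tulap0_cell_strict_mono:
  assumes "0 < b" "b < 1" "t1 < t2"
  shows "tulap0_cell b k t1 < tulap0_cell b k t2"
proof (cases "k \<le> 0")
  case True
  have "b powi (-k) / (1+b) * (b + (t1 + 1/2)*(1-b)) < b powi (-k) / (1+b) * (b + (t2 + 1/2)*(1-b))"
    using assms by (intro mult_strict_left_mono) auto
  then show ?thesis using True unfolding tulap0_cell_def by simp
next
  case False
  have "b powi k / (1+b) * (b + (1/2 - t2)*(1-b)) < b powi k / (1+b) * (b + (1/2 - t1)*(1-b))"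
    using assms by (intro mult_strict_left_mono) auto
  then show ?thesis using False unfolding tulap0_cell_def by simp
qed

lemma tulap0_cell_uminus:
  assumes "0 < b"
  shows "tulap0_cell b (-k) (-t) = 1 - tulap0_cell b k t"
proof -
  consider "k < 0" | "k = 0" | "k > 0" by linarith
  then show ?thesis
    by cases (use assms in \<open>auto simp: tulap0_cell_def field_simps\<close>)
qed

definition geom_diff_pmf :: "real \<Rightarrow> int pmf" where
  "geom_diff_pmf b = map_pmf (\<lambda>(i, j). int i - int j) (pair_pmf (geom_pmf b) (geom_pmf b))"

lemma pmf_geom_pmf: "0 < b \<Longrightarrow> b < 1 \<Longrightarrow> pmf (geom_pmf b) n = b ^ n * (1 - b)"
  unfolding geom_pmf_def by simp

lemma pmf_geom_diff_pmf_nonneg: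
  assumes b: "0 < b" "b < 1" and "0 \<le> k"
  shows "pmf (geom_diff_pmf b) k = (1 - b) / (1 + b) * b ^ nat k"
proof -
  let ?P = "pair_pmf (geom_pmf b) (geom_pmf b)"
  define n where "n = nat k"
  have bij: "bij_betw (\<lambda>j. (j + n, j)) UNIV ((\<lambda>(i, j). int i - int j) -` {k})"
    unfolding bij_betw_def inj_on_def n_def using \<open>0 \<le> k\<close>
    by (auto simp: image_iff intro!: exI[of _ "snd _"])
  have summable: "summable (\<lambda>j. (1-b)^2 * b^n * (b^2)^j)"
    using b by (intro summable_mult summable_geometric) (simp add: abs_less_iff power_less_one_iff)
  have "pmf (geom_diff_pmf b) k = infsetsum (pmf ?P) ((\<lambda>(i, j). int i - int j) -` {k})"
    unfolding geom_diff_pmf_def pmf_map by (rule measure_pmf_conv_infsetsum)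
  also have "\<dots> = infsetsum (\<lambda>j. pmf ?P (j + n, j)) UNIV"
    by (rule infsetsum_reindex_bij_betw[OF bij, symmetric])
  also have "\<dots> = infsetsum (\<lambda>j. (1-b)^2 * b^n * (b^2)^j) UNIV"
    unfolding pmf_pair using b
    by (intro infsetsum_cong) (auto simp: pmf_geom_pmf power_add power_mult_distrib power2_eq_square mult_ac)
  also have "\<dots> = (\<Sum>j. (1-b)^2 * b^n * (b^2)^j)"
    using summable b by (intro infsetsum_nat') (simp add: abs_summable_on_nat_iff')
  also have "\<dots> = (1-b)^2 * b^n / (1 - b^2)"
    using b by (intro sums_unique[symmetric] sums_mult geometric_sums[THEN sums_mult, of _ "(1-b)^2 * b^n", simplified])
      (simp_all add: abs_less_iff power_less_one_iff)
  also have "\<dots> = (1 - b) / (1 + b) * b ^ nat k"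
  proof -
    have "1 - b^2 = (1 - b) * (1 + b)" by (simp add: power2_eq_square algebra_simps)
    moreover have "1 - b \<noteq> 0" "1 + b \<noteq> 0" using b by auto
    ultimately show ?thesis by (simp add: n_def power2_eq_square)
  qed
  finally show ?thesis .
qed

lemma pmf_geom_diff_pmf_uminus: "pmf (geom_diff_pmf b) (-k) = pmf (geom_diff_pmf b) k"
proof -
  let ?P = "pair_pmf (geom_pmf b) (geom_pmf b)"
  have "pmf (geom_diff_pmf b) (-k)
      = measure (map_pmf (\<lambda>(x, y). (y, x)) ?P) ((\<lambda>(i, j). int i - int j) -` {-k})"
    unfolding geom_diff_pmf_def pmf_map by (subst pair_commute_pmf) simp
  also have "\<dots> = measure ?P ((\<lambda>(i, j). int i - int j) -` {k})"
    by (simp add: vimage_def case_prod_unfold) (intro arg_cong[where f="measure _"]; auto)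
  finally show ?thesis unfolding geom_diff_pmf_def pmf_map .
qed

lemma pmf_geom_diff_pmf:
  assumes "0 < b" "b < 1"
  shows "pmf (geom_diff_pmf b) k = (1 - b) / (1 + b) * b ^ nat \<bar>k\<bar>"
  using pmf_geom_diff_pmf_nonneg[OF assms, of k] pmf_geom_diff_pmf_nonneg[OF assms, of "-k"]
    pmf_geom_diff_pmf_uminus[of b k]
  by (cases "0 \<le> k") auto

lemma dlap_pmf_eq_geom_diff_pmf:
  assumes "0 < b" "b < 1"
  shows "dlap_pmf b = geom_diff_pmf b"
proof -
  have "(\<lambda>x. (1 - b) / (1 + b) * b ^ nat \<bar>x\<bar>) = pmf (geom_diff_pmf b)"
    using pmf_geom_diff_pmf[OF assms] by auto
  then show ?thesis unfolding dlap_pmf_def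
    by (simp add: type_definition.Rep_inverse[OF td_pmf_embed_pmf])
qed

lemma pmf_dlap_pmf:
  assumes "0 < b" "b < 1"
  shows "pmf (dlap_pmf b) k = (1 - b) / (1 + b) * b ^ nat \<bar>k\<bar>"
  using pmf_geom_diff_pmf[OF assms] dlap_pmf_eq_geom_diff_pmf[OF assms] by simp

lemma measure_pmf_atMost_int:
  "measure_pmf.prob D {..(j::int)} = measure_pmf.prob D {..j-1} + pmf D j"
proof -
  have "{..j} = {..j-1} \<union> {j}" by auto
  moreover have "measure_pmf.prob D ({..j-1} \<union> {j}) = measure_pmf.prob D {..j-1} + measure_pmf.prob D {j}"
    by (rule measure_pmf.finite_measure_Union) auto
  ultimately show ?thesis by (simp only: pmf.rep_eq)
qed

definition dlap_cdf :: "real \<Rightarrow> int \<Rightarrow> real" where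
  "dlap_cdf b j = (if j < 0 then b ^ nat (-j) / (1+b) else 1 - b ^ nat (j+1) / (1+b))"

lemma dlap_cdf_pred:
  assumes "0 < b"
  shows "dlap_cdf b j = dlap_cdf b (j - 1) + (1 - b) / (1 + b) * b ^ nat \<bar>j\<bar>"
proof -
  have split: "x / (1+b) = b * x / (1+b) + (1-b) / (1+b) * x" for x
    using assms by (simp add: divide_simps) (simp add: algebra_simps)
  show ?thesis
  proof (cases j)
    case (nonneg n)
    show ?thesis
    proof (cases n)
      case 0
      then show ?thesis using nonneg assms by (simp add: dlap_cdf_def divide_simps)
    next
      case (Suc n')
      then show ?thesis using nonneg split[of "b ^ Suc n'"] by (simp add: dlap_cdf_def nat_add_distrib)
    qed
  next
    case (neg n)
    then show ?thesis using split[of "b ^ Suc n"] by (simp add: dlap_cdf_def nat_add_distrib)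
  qed
qed

lemma measure_dlap_pmf_atMost_minus_one:
  assumes "0 < b" "b < 1"
  shows "measure_pmf.prob (dlap_pmf b) {..-1} = b / (1+b)"
proof -
  let ?D = "measure_pmf (dlap_pmf b)"
  note p = pmf_dlap_pmf[OF assms]
  have sym: "measure ?D {1..} = measure ?D {..-1}"
  proof -
    have "measure ?D {1..} = infsetsum (\<lambda>x. pmf (dlap_pmf b) (- x)) {..-1}"
      unfolding measure_pmf_conv_infsetsum
      by (rule infsetsum_reindex_bij_betw[symmetric])
         (auto simp: bij_betw_def image_iff intro!: exI[of _ "- _"])
    also have "\<dots> = measure ?D {..-1}"
      unfolding measure_pmf_conv_infsetsum by (intro infsetsum_cong) (simp_all add: p)
    finally show ?thesis .
  qed
  have "UNIV = ({..-1} \<union> {0::int}) \<union> {1..}" by auto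
  then have "1 = measure ?D ({..-1} \<union> {0::int} \<union> {1..})" by simp
  also have "\<dots> = measure ?D ({..-1} \<union> {0}) + measure ?D {1..}"
    by (rule measure_pmf.finite_measure_Union) auto
  also have "measure ?D ({..-1} \<union> {0}) = measure ?D {..-1} + measure ?D {0}"
    by (rule measure_pmf.finite_measure_Union) auto
  finally have "1 = measure ?D {..-1} + pmf (dlap_pmf b) 0 + measure ?D {1..}"
    by (simp add: pmf.rep_eq)
  then have "1 = 2 * measure ?D {..-1} + (1-b)/(1+b)" using sym p[of 0] by simp
  then show ?thesis using assms by (simp add: field_simps)
qed

lemma measure_dlap_pmf_atMost:
  assumes "0 < b" "b < 1"
  shows "measure_pmf.prob (dlap_pmf b) {..j} = dlap_cdf b j"
proof (induction j rule: int_induct[where k="-1"])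
  case base
  then show ?case using measure_dlap_pmf_atMost_minus_one[OF assms] by (simp add: dlap_cdf_def)
next
  case (step1 i)
  then show ?case
    using measure_pmf_atMost_int[of "dlap_pmf b" "i+1"] dlap_cdf_pred[OF assms(1), of "i+1"]
    by (simp add: pmf_dlap_pmf[OF assms])
next
  case (step2 i)
  then show ?case
    using measure_pmf_atMost_int[of "dlap_pmf b" i] dlap_cdf_pred[OF assms(1), of i]
    by (simp add: pmf_dlap_pmf[OF assms])
qed

lemma dlap_cdf_pred_plus_pmf:
  assumes "0 < b" "b < 1"
  shows "dlap_cdf b (k - 1) + (t + 1/2) * ((1 - b) / (1 + b) * b ^ nat \<bar>k\<bar>) = tulap0_cell b k t"
proof (cases "k \<le> 0")
  case True
  then obtain n where "k = - int n" by (metis minus_minus nonneg_int_cases neg_0_le_iff_le)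
  then show ?thesis using assms
    by (simp add: dlap_cdf_def tulap0_cell_def nat_add_distrib divide_simps) (simp add: algebra_simps)
next
  case False
  then obtain n where "k = int n" by (metis nonneg_int_cases linorder_linear)
  then show ?thesis using False assms
    by (simp add: dlap_cdf_def tulap0_cell_def nat_add_distrib divide_simps) (simp add: algebra_simps)
qed

lemma prob_space_unif_half: "prob_space unif_half"
  unfolding unif_half_def by (rule prob_space_uniform_measure) auto

lemma sets_unif_half [measurable_cong]: "sets unif_half = sets borel"
  unfolding unif_half_def by simp

lemma space_unif_half [simp]: "space unif_half = UNIV"
  by (rule sets_eq_imp_space_eq[OF sets_unif_half, simplified])

lemma emeasure_unif_half:
  "S \<in> sets borel \<Longrightarrow> emeasure unif_half S = emeasure lborel ({-1/2<..<1/2} \<inter> S)"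
  unfolding unif_half_def by (simp add: divide_ennreal_def Int_commute)

lemma emeasure_unif_half_atMost: "emeasure unif_half {..s} = ennreal (max 0 (min 1 (s + 1/2)))"
proof -
  consider "s \<le> -1/2" | "-1/2 < s" "s < 1/2" | "1/2 \<le> s" by linarith
  then have "emeasure lborel ({-1/2<..<1/2} \<inter> {..s}) = ennreal (max 0 (min 1 (s + 1/2)))"
  proof cases
    case 1
    then have "{-1/2<..<1/2} \<inter> {..s} = {}" by auto
    then show ?thesis using 1 by simp
  next
    case 2
    then have "{-1/2<..<1/2} \<inter> {..s} = {-1/2<..s}" by auto
    then show ?thesis using 2 by simp
  next
    case 3
    then have "{-1/2<..<1/2} \<inter> {..s} = {-1/2<..<1/2}" by auto
    then show ?thesis using 3 by simp
  qed
  then show ?thesis by (simp add: emeasure_unif_half)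
qed

lemma emeasure_unif_half_singleton: "emeasure unif_half {s} = 0"
proof -
  have "emeasure lborel ({-1/2<..<1/2} \<inter> {s}) \<le> emeasure lborel {s}"
    by (rule emeasure_mono) auto
  then show ?thesis by (simp add: emeasure_unif_half)
qed

lemma sigma_finite_unif_half: "sigma_finite_measure unif_half"
  by (rule prob_space_imp_sigma_finite[OF prob_space_unif_half])

definition tulap0_measure :: "real \<Rightarrow> real \<Rightarrow> real measure" where
  "tulap0_measure b m =
     distr (measure_pmf (dlap_pmf b) \<Otimes>\<^sub>M unif_half) borel (\<lambda>(l, u). real_of_int l + u + m)"

lemma cdf_int_plus_unif_half:
  assumes t: "\<bar>t\<bar> \<le> 1/2"
  shows "cdf (distr (measure_pmf D \<Otimes>\<^sub>M unif_half) borel (\<lambda>(l, u). real_of_int l + u + m))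
           (m + of_int k + t)
       = measure_pmf.prob D {..k-1} + (t + 1/2) * pmf D k"
proof -
  have window: "ennreal (max 0 (min 1 (of_int k + t - of_int l + 1/2)))
      = indicator {..k-1} l + ennreal (t + 1/2) * indicator {k} l" for l
  proof -
    consider "l \<le> k - 1" | "l = k" | "l \<ge> k + 1" by linarith
    then show ?thesis
    proof cases
      case 1
      then have "of_int l \<le> (of_int k - 1 :: real)" by linarith
      then show ?thesis using 1 t by (simp add: indicator_def)
    next
      case 3
      then have "of_int l \<ge> (of_int k + 1 :: real)" by linarith
      then show ?thesis using 3 t by (simp add: indicator_def)
    qed (use t in simp)
  qed
  have "emeasure (distr (measure_pmf D \<Otimes>\<^sub>M unif_half) borel (\<lambda>(l, u). real_of_int l + u + m))
          {..m + of_int k + t}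
      = (\<integral>\<^sup>+ l. emeasure unif_half {..of_int k + t - of_int l} \<partial>measure_pmf D)"
    by (subst emeasure_distr_measure_pmf_pair[OF sigma_finite_unif_half])
       (auto intro!: nn_integral_cong arg_cong[where f="emeasure _"])
  also have "\<dots> = (\<integral>\<^sup>+ l. indicator {..k-1} l + ennreal (t + 1/2) * indicator {k} l \<partial>measure_pmf D)"
    by (intro nn_integral_cong) (simp only: emeasure_unif_half_atMost window)
  also have "\<dots> = ennreal (measure_pmf.prob D {..k-1} + (t + 1/2) * pmf D k)"
    using t by (simp add: nn_integral_add nn_integral_cmult measure_pmf.emeasure_eq_measure
        pmf.rep_eq ennreal_mult)
  finally have E: "emeasure (distr (measure_pmf D \<Otimes>\<^sub>M unif_half) borel (\<lambda>(l, u). real_of_int l + u + m))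
      {..m + of_int k + t} = ennreal (measure_pmf.prob D {..k-1} + (t + 1/2) * pmf D k)" .
  have "0 \<le> measure_pmf.prob D {..k-1} + (t + 1/2) * pmf D k" using t by simp
  then show ?thesis unfolding cdf_def2 measure_def E by (rule enn2real_ennreal)
qed

lemma cdf_tulap0_measure:
  assumes "0 < b" "b < 1"
  shows "cdf (tulap0_measure b m) x = tulap0_cdf m b x"
proof -
  define k where "k = nint (x - m)"
  define t where "t = x - m - of_int k"
  have t: "\<bar>t\<bar> \<le> 1/2" unfolding t_def k_def by (rule abs_sub_nint_le)
  have "x = m + of_int k + t" by (simp add: t_def)
  then have "cdf (tulap0_measure b m) x = dlap_cdf b (k - 1) + (t + 1/2) * pmf (dlap_pmf b) k"
    using cdf_int_plus_unif_half[OF t] measure_dlap_pmf_atMost[OF assms]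
    by (simp add: tulap0_measure_def)
  also have "\<dots> = tulap0_cell b k t"
    unfolding pmf_dlap_pmf[OF assms] by (rule dlap_cdf_pred_plus_pmf[OF assms])
  also have "\<dots> = tulap0_cdf m b x"
    using tulap0_cdf_eq_cell[OF assms(1), of "x - m" k m] t by (simp add: t_def)
  finally show ?thesis .
qed

lemma space_trial_measure [simp]: "space (trial_measure b) = UNIV"
  by (simp add: trial_measure_def space_pair_measure)

lemma distr_trial_measure_eq_tulap0_measure:
  assumes "0 < b" "b < 1"
  shows "distr (trial_measure b) borel (\<lambda>(g1, g2, u). real g1 - real g2 + u + m) = tulap0_measure b m"
proof (rule measure_eqI)
  let ?G = "measure_pmf (geom_pmf b)"
  fix S assume "S \<in> sets (distr (trial_measure b) borel (\<lambda>(g1, g2, u). real g1 - real g2 + u + m))"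
  then have S: "S \<in> sets borel" by simp
  have GU: "sigma_finite_measure (?G \<Otimes>\<^sub>M unif_half)"
    by (intro prob_space_imp_sigma_finite prob_space_pair prob_space_unif_half prob_space_measure_pmf)
  have inner: "emeasure (?G \<Otimes>\<^sub>M unif_half) {p \<in> space (?G \<Otimes>\<^sub>M unif_half). real g1 - real (fst p) + snd p + m \<in> S}
      = (\<integral>\<^sup>+ g2. emeasure unif_half {u. real g1 - real g2 + u + m \<in> S} \<partial>?G)" for g1
  proof -
    have "{p \<in> space (?G \<Otimes>\<^sub>M unif_half). real g1 - real (fst p) + snd p + m \<in> S} \<in> sets (?G \<Otimes>\<^sub>M unif_half)"
      using S by measurable
    then show ?thesis
      by (simp add: sigma_finite_measure.emeasure_pair_measure_alt[OF sigma_finite_unif_half]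
          vimage_def space_pair_measure)
  qed
  have "emeasure (distr (trial_measure b) borel (\<lambda>(g1, g2, u). real g1 - real g2 + u + m)) S
      = (\<integral>\<^sup>+ g1. \<integral>\<^sup>+ g2. emeasure unif_half {u. real g1 - real g2 + u + m \<in> S} \<partial>?G \<partial>?G)"
    using S unfolding trial_measure_def
    by (simp add: emeasure_distr_measure_pmf_pair[OF GU] case_prod_unfold inner)
  also have "\<dots> = emeasure (tulap0_measure b m) S"
    using S unfolding tulap0_measure_def dlap_pmf_eq_geom_diff_pmf[OF assms] geom_diff_pmf_def
    by (simp add: emeasure_distr_measure_pmf_pair[OF sigma_finite_unif_half]
        nn_integral_pair_pmf' case_prod_unfold)
  finally show "emeasure (distr (trial_measure b) borel (\<lambda>(g1, g2, u). real g1 - real g2 + u + m)) S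
      = emeasure (tulap0_measure b m) S" .
qed (simp add: tulap0_measure_def)

lemma real_distribution_tulap0_measure: "real_distribution (tulap0_measure b m)"
proof -
  interpret prob_space "measure_pmf (dlap_pmf b) \<Otimes>\<^sub>M unif_half"
    by (intro prob_space_pair prob_space_unif_half prob_space_measure_pmf)
  show ?thesis unfolding tulap0_measure_def by (intro real_distribution_distr) simp
qed

lemma measure_tulap0_measure_singleton: "measure (tulap0_measure b m) {x} = 0"
proof -
  have "emeasure (tulap0_measure b m) {x}
      = (\<integral>\<^sup>+ l. emeasure unif_half {x - m - real_of_int l} \<partial>measure_pmf (dlap_pmf b))"
    unfolding tulap0_measure_def
    by (subst emeasure_distr_measure_pmf_pair[OF sigma_finite_unif_half])
       (auto intro!: nn_integral_cong arg_cong[where f="emeasure _"])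
  then show ?thesis by (simp add: emeasure_unif_half_singleton measure_def)
qed

context
  fixes b m :: real
  assumes b: "0 < b" "b < 1"
begin

interpretation tulap0: real_distribution "tulap0_measure b m"
  by (rule real_distribution_tulap0_measure)

lemma tulap0_cdf_eq_cdf: "tulap0_cdf m b = cdf (tulap0_measure b m)"
  using cdf_tulap0_measure[OF b] by auto

lemma isCont_tulap0_cdf: "isCont (tulap0_cdf m b) x"
  unfolding tulap0_cdf_eq_cdf tulap0.isCont_cdf by (rule measure_tulap0_measure_singleton)

lemma tulap0_cdf_bounds: "0 \<le> tulap0_cdf m b x" "tulap0_cdf m b x \<le> 1"
  unfolding tulap0_cdf_eq_cdf by (rule tulap0.cdf_nonneg tulap0.cdf_bounded_prob)+

lemma tulap0_cdf_strict_mono: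
  assumes "x < y"
  shows "tulap0_cdf m b x < tulap0_cdf m b y"
proof -
  define k where "k = \<lfloor>x - m + 1/2\<rfloor>"
  have k: "of_int k \<le> x - m + 1/2" "x - m + 1/2 < of_int k + 1" unfolding k_def by linarith+
  define z where "z = min y (m + of_int k + 1/2)"
  have xz: "x < z" "z \<le> y" "z \<le> m + of_int k + 1/2" unfolding z_def using assms k by auto
  have "tulap0_cdf m b (m + (x - m)) = tulap0_cell b k (x - m - of_int k)"
    using k by (intro tulap0_cdf_eq_cell[OF b(1)]) (unfold abs_le_iff, linarith)
  also have "\<dots> < tulap0_cell b k (z - m - of_int k)"
    using tulap0_cell_strict_mono[OF b] xz by simp
  also have "\<dots> = tulap0_cdf m b (m + (z - m))"
    using k xz by (intro tulap0_cdf_eq_cell[OF b(1), symmetric]) (unfold abs_le_iff, linarith)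
  also have "\<dots> \<le> tulap0_cdf m b y"
    unfolding tulap0_cdf_eq_cdf using xz by (simp add: tulap0.cdf_nondecreasing)
  finally show ?thesis by simp
qed

lemma tulap0_cdf_le_iff: "tulap0_cdf m b x \<le> tulap0_cdf m b y \<longleftrightarrow> x \<le> y"
  using tulap0_cdf_strict_mono[of y x] tulap0_cdf_strict_mono[of x y] by (cases x y rule: linorder_cases) auto

lemma tulap0_cdf_surj:
  assumes "0 < v" "v < 1"
  obtains a where "tulap0_cdf m b a = v"
proof -
  have "eventually (\<lambda>y. tulap0_cdf m b y < v) at_bot"
    using order_tendstoD(2)[OF tulap0.cdf_lim_at_bot assms(1)] by (simp add: tulap0_cdf_eq_cdf)
  then obtain lo where lo: "tulap0_cdf m b lo < v"
    by (auto simp: eventually_at_bot_linorder)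
  have "eventually (\<lambda>y. v < tulap0_cdf m b y) at_top"
    using order_tendstoD(1)[OF tulap0.cdf_lim_at_top_prob assms(2)] by (simp add: tulap0_cdf_eq_cdf)
  then obtain N where "\<forall>y\<ge>N. v < tulap0_cdf m b y"
    by (auto simp: eventually_at_top_linorder)
  then have hi: "v < tulap0_cdf m b (max lo N)" by simp
  have "\<exists>a. lo \<le> a \<and> a \<le> max lo N \<and> tulap0_cdf m b a = v"
    using lo hi by (intro IVT' continuous_at_imp_continuous_on ballI isCont_tulap0_cdf) auto
  then show ?thesis using that by blast
qed

lemma tulap0_cdf_reflect: "tulap0_cdf m b (2*m - x) = 1 - tulap0_cdf m b x"
proof -
  define k where "k = nint (x - m)"
  define t where "t = x - m - of_int k"
  have t: "\<bar>t\<bar> \<le> 1/2" unfolding t_def k_def by (rule abs_sub_nint_le)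
  have "tulap0_cdf m b (m + (x - m)) = tulap0_cell b k t"
    using tulap0_cdf_eq_cell[OF b(1), of "x - m" k m] t by (simp add: t_def)
  moreover have "tulap0_cdf m b (m + (m - x)) = tulap0_cell b (-k) (m - x - of_int (-k))"
    using t by (intro tulap0_cdf_eq_cell[OF b(1)]) (unfold t_def abs_le_iff, linarith)
  moreover have "m - x - of_int (-k) = -t" by (simp add: t_def)
  ultimately show ?thesis by (simp add: tulap0_cell_uminus[OF b(1)])
qed

end
definition tulap_rescale :: "real \<Rightarrow> real \<Rightarrow> real" where
  "tulap_rescale q s = max 0 (min 1 ((s - q/2) / (1 - q)))"

lemma tulap_cdf_eq_rescale:
  assumes "0 \<le> q" "q < 1"
  shows "tulap_cdf m b q x = tulap_rescale q (tulap0_cdf m b x)"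
proof -
  define s where "s = tulap0_cdf m b x"
  have "0 < 1 - q" using assms by simp
  consider "q/2 \<le> s" "s \<le> 1 - q/2" | "s > 1 - q/2" | "s < q/2" by linarith
  then show ?thesis
  proof cases
    case 1
    then have "0 \<le> (s - q/2) / (1 - q)" "(s - q/2) / (1 - q) \<le> 1"
      using \<open>0 < 1 - q\<close> by (simp_all add: field_simps)
    then show ?thesis using 1 by (simp add: tulap_cdf_def tulap_rescale_def flip: s_def)
  next
    case 2
    then have "(s - q/2) / (1 - q) > 1" using \<open>0 < 1 - q\<close> by (simp add: field_simps)
    then show ?thesis using 2 assms by (simp add: tulap_cdf_def tulap_rescale_def flip: s_def)
  next
    case 3
    then have "(s - q/2) / (1 - q) < 0" using \<open>0 < 1 - q\<close> by (simp add: field_simps)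
    then show ?thesis using 3 assms by (simp add: tulap_cdf_def tulap_rescale_def flip: s_def)
  qed
qed

lemma tulap_rescale_reflect:
  assumes "q < 1"
  shows "tulap_rescale q (1 - s) = 1 - tulap_rescale q s"
proof -
  have "((1 - s) - q/2) / (1 - q) = 1 - (s - q/2) / (1 - q)" using assms by (simp add: field_simps)
  then show ?thesis unfolding tulap_rescale_def by simp
qed

lemma isCont_tulap_cdf:
  assumes "0 < b" "b < 1" "0 \<le> q" "q < 1"
  shows "isCont (tulap_cdf m b q) x"
proof -
  have "tulap_cdf m b q = (\<lambda>x. tulap_rescale q (tulap0_cdf m b x))"
    using tulap_cdf_eq_rescale[OF assms(3,4)] by auto
  then show ?thesis
    unfolding tulap_rescale_def using assms(4)
    by (simp only:) (intro continuous_intros isCont_tulap0_cdf[OF assms(1,2)]; simp)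
qed

lemma tulap_cdf_reflect:
  assumes "0 < b" "b < 1" "0 \<le> q" "q < 1"
  shows "tulap_cdf m b q (2*m - x) = 1 - tulap_cdf m b q x"
  using assms by (simp add: tulap_cdf_eq_rescale tulap0_cdf_reflect tulap_rescale_reflect)

lemma tulap_law_continuous_symmetric:
  assumes b: "0 < b" "b < 1" and q: "0 \<le> q" "q < 1"
    and "prob_space M" and N: "N \<in> borel_measurable M"
    and cdf: "\<And>x. cdf (distr M borel N) x = tulap_cdf m b q x"
  shows "isCont (cdf (distr M borel N)) x" and "distr M borel N = distr M borel (\<lambda>\<omega>. 2*m - N \<omega>)"
proof -
  interpret prob_space M by fact
  have cdf_eq: "cdf (distr M borel N) = tulap_cdf m b q" using cdf by auto
  show cont: "isCont (cdf (distr M borel N)) x" for x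
    unfolding cdf_eq by (rule isCont_tulap_cdf[OF b q])
  have "distr M borel (\<lambda>\<omega>. 2*m - N \<omega>) = distr (distr M borel N) borel (\<lambda>y. 2*m - y)"
    using N by (subst distr_distr) (auto simp: comp_def)
  also have "\<dots> = distr M borel N"
    using N cont by (intro distr_reflect_eq_if_cdf_reflect)
      (simp_all add: cdf_eq tulap_cdf_reflect[OF b q])
  finally show "distr M borel N = distr M borel (\<lambda>\<omega>. 2*m - N \<omega>)" ..
qed

definition tulap_accept :: "real \<Rightarrow> real \<Rightarrow> real \<Rightarrow> real set" where
  "tulap_accept m b q = {y. q/2 \<le> tulap0_cdf m b y \<and> tulap0_cdf m b y \<le> 1 - q/2}"

lemma tulap_accept_borel:
  assumes "0 < b" "b < 1"
  shows "tulap_accept m b q \<in> sets borel"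
proof -
  have [measurable]: "tulap0_cdf m b \<in> borel_measurable borel"
    by (intro borel_measurable_continuous_onI continuous_at_imp_continuous_on ballI
        isCont_tulap0_cdf[OF assms])
  show ?thesis unfolding tulap_accept_def by measurable
qed

lemma tulap_accept_0:
  assumes "0 < b" "b < 1"
  shows "tulap_accept m b 0 = UNIV"
  using tulap0_cdf_bounds[OF assms] by (auto simp: tulap_accept_def)

lemma tulap_accept_eq_atLeastAtMost:
  assumes b: "0 < b" "b < 1" and q: "0 < q" "q < 1"
  obtains a c where "tulap0_cdf m b a = q/2" "tulap0_cdf m b c = 1 - q/2" "a \<le> c"
    "tulap_accept m b q = {a..c}"
proof -
  obtain a where a: "tulap0_cdf m b a = q/2"
    by (rule tulap0_cdf_surj[OF b, where m=m and v="q/2"]) (use q in auto)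
  obtain c where c: "tulap0_cdf m b c = 1 - q/2"
    by (rule tulap0_cdf_surj[OF b, where m=m and v="1 - q/2"]) (use q in auto)
  have "a \<le> c" using tulap0_cdf_le_iff[OF b, of m a c] a c q by simp
  moreover have "tulap_accept m b q = {a..c}"
    unfolding tulap_accept_def using tulap0_cdf_le_iff[OF b, of m a] tulap0_cdf_le_iff[OF b, of m _ c] a c
    by auto
  ultimately show ?thesis using that a c by blast
qed

lemma measure_tulap_accept:
  assumes b: "0 < b" "b < 1" and q: "0 \<le> q" "q < 1"
  shows "measure (tulap0_measure b m) (tulap_accept m b q) = 1 - q"
proof (cases "q = 0")
  case True
  interpret real_distribution "tulap0_measure b m" by (rule real_distribution_tulap0_measure)
  show ?thesis using True prob_space by (simp add: tulap_accept_0[OF b])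
next
  case False
  with q have "0 < q" by simp
  obtain a c where "tulap0_cdf m b a = q/2" "tulap0_cdf m b c = 1 - q/2" "a \<le> c"
    "tulap_accept m b q = {a..c}"
    by (rule tulap_accept_eq_atLeastAtMost[OF b \<open>0 < q\<close> q(2)])
  then show ?thesis
    by (simp add: measure_atLeastAtMost_eq_cdf_diff real_distribution_tulap0_measure
        measure_tulap0_measure_singleton cdf_tulap0_measure[OF b])
qed

lemma measure_tulap_accept_atMost:
  assumes b: "0 < b" "b < 1" and q: "0 \<le> q" "q < 1"
  shows "measure (tulap0_measure b m) (tulap_accept m b q \<inter> {..x}) = (1 - q) * tulap_cdf m b q x"
proof (cases "q = 0")
  case True
  then show ?thesis
    using tulap0_cdf_bounds[OF b, of m x]
    by (simp add: tulap_accept_0[OF b] tulap_cdf_def cdf_def2 cdf_tulap0_measure[OF b, symmetric])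
next
  case False
  with q have "0 < q" by simp
  obtain a c where a: "tulap0_cdf m b a = q/2" and c: "tulap0_cdf m b c = 1 - q/2"
    and "a \<le> c" and accept: "tulap_accept m b q = {a..c}"
    by (rule tulap_accept_eq_atLeastAtMost[OF b \<open>0 < q\<close> q(2)])
  let ?F = "tulap0_cdf m b"
  have measure_Icc: "measure (tulap0_measure b m) {a..z} = ?F z - ?F a" if "a \<le> z" for z
    using that by (simp add: measure_atLeastAtMost_eq_cdf_diff real_distribution_tulap0_measure
        measure_tulap0_measure_singleton cdf_tulap0_measure[OF b])
  consider "x < a" | "a \<le> x" "x \<le> c" | "c < x" by linarith
  then show ?thesis
  proof cases
    case 1
    then have "?F x < q/2" using tulap0_cdf_strict_mono[OF b 1, of m] a by simp
    moreover have "tulap_accept m b q \<inter> {..x} = {}" using 1 accept by auto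
    ultimately show ?thesis using q by (simp add: tulap_cdf_def)
  next
    case 2
    then have "q/2 \<le> ?F x" "?F x \<le> 1 - q/2"
      using tulap0_cdf_le_iff[OF b, of m a x] tulap0_cdf_le_iff[OF b, of m x c] a c by auto
    moreover have "tulap_accept m b q \<inter> {..x} = {a..x}" using 2 accept by auto
    ultimately show ?thesis using 2 a q measure_Icc[of x] by (simp add: tulap_cdf_def)
  next
    case 3
    then have "?F x > 1 - q/2" using tulap0_cdf_strict_mono[OF b 3, of m] c by simp
    moreover have "tulap_accept m b q \<inter> {..x} = {a..c}" using 3 accept \<open>a \<le> c\<close> by auto
    ultimately show ?thesis using measure_Icc[OF \<open>a \<le> c\<close>] a c by (simp add: tulap_cdf_def)
  qed
qed

lemma tulap_rejection_sampler:
  fixes m :: real and Z :: "nat \<Rightarrow> 'a \<Rightarrow> nat \<times> nat \<times> real"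
  assumes b: "0 < b" "b < 1" and q: "0 \<le> q" "q < 1"
    and "iid_trials M (trial_measure b) Z"
  defines "X \<equiv> \<lambda>k \<omega>. case Z k \<omega> of (g1, g2, u) \<Rightarrow> real g1 - real g2 + u + m"
  shows "AE \<omega> in M. \<exists>k. X k \<omega> \<in> tulap_accept m b q"
    and "cdf (distr M borel (\<lambda>\<omega>. X (LEAST k. X k \<omega> \<in> tulap_accept m b q) \<omega>)) x = tulap_cdf m b q x"
proof -
  interpret iid_trials M "trial_measure b" Z by fact
  define f where "f = (\<lambda>(g1, g2, u). real g1 - real g2 + u + m)"
  have f_measurable [measurable]: "f \<in> borel_measurable (trial_measure b)"
    unfolding f_def trial_measure_def by measurable
  have X_eq: "X k \<omega> = f (Z k \<omega>)" for k \<omega> by (simp add: X_def f_def)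
  have measure_trial: "measure (trial_measure b) (f -` B) = measure (tulap0_measure b m) B"
    if "B \<in> sets borel" for B
  proof -
    have "measure (tulap0_measure b m) B = measure (distr (trial_measure b) borel f) B"
      by (simp add: f_def distr_trial_measure_eq_tulap0_measure[OF b])
    also have "\<dots> = measure (trial_measure b) (f -` B)"
      using that by (simp add: measure_distr)
    finally show ?thesis ..
  qed
  let ?A = "f -` tulap_accept m b q"
  have A: "?A \<in> sets (trial_measure b)" "measure (trial_measure b) ?A = 1 - q"
    using measurable_sets[of f "trial_measure b" borel, OF _ tulap_accept_borel[OF b]]
    by (simp_all add: measure_trial tulap_accept_borel[OF b] measure_tulap_accept[OF b q])
  then show "AE \<omega> in M. \<exists>k. X k \<omega> \<in> tulap_accept m b q"
    using AE_eventually_accepted[of ?A] q by (simp add: X_eq)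
  have "(\<lambda>\<omega>. f (Z (LEAST k. Z k \<omega> \<in> ?A) \<omega>)) \<in> borel_measurable M"
    using A q f_measurable by (intro measurable_compose[OF measurable_first_accepted]) auto
  then have "cdf (distr M borel (\<lambda>\<omega>. f (Z (LEAST k. Z k \<omega> \<in> ?A) \<omega>))) x
      = prob {\<omega> \<in> space M. Z (LEAST k. Z k \<omega> \<in> ?A) \<omega> \<in> f -` {..x}}"
    by (simp add: cdf_def2 measure_distr vimage_def Int_def conj_commute)
  also have "\<dots> = measure (trial_measure b) (f -` (tulap_accept m b q \<inter> {..x})) / (1 - q)"
    using A q measurable_sets[OF f_measurable, of "{..x}"] by (subst prob_first_accepted) simp_all
  also have "\<dots> = tulap_cdf m b q x"
    using q tulap_accept_borel[OF b]
    by (subst measure_trial) (auto simp: measure_tulap_accept_atMost[OF b q])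
  finally show "cdf (distr M borel (\<lambda>\<omega>. X (LEAST k. X k \<omega> \<in> tulap_accept m b q) \<omega>)) x = tulap_cdf m b q x"
    by (simp add: X_eq)
qed

theorem lemma1:
  fixes m b q :: real
  assumes "0 < b" "b < 1" "0 \<le> q" "q < 1"
  shows
   "(\<forall>x. cdf (distr (measure_pmf (dlap_pmf b) \<Otimes>\<^sub>M unif_half) borel
                 (\<lambda>(l, u). real_of_int l + u + m)) x = tulap0_cdf m b x)
  \<and> (\<forall>x. cdf (distr (trial_measure b) borel
                 (\<lambda>(g1, g2, u). real g1 - real g2 + u + m)) x = tulap0_cdf m b x)
  \<and> (\<forall>(M :: 'a measure) (Z :: nat \<Rightarrow> 'a \<Rightarrow> nat \<times> nat \<times> real).
       prob_space M \<longrightarrow>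
       prob_space.indep_vars M (\<lambda>_. trial_measure b) Z UNIV \<longrightarrow>
       (\<forall>k. distr M (trial_measure b) (Z k) = trial_measure b) \<longrightarrow>
       (let X = (\<lambda>k \<omega>. case Z k \<omega> of (g1, g2, u) \<Rightarrow> real g1 - real g2 + u + m);
            acc = (\<lambda>k \<omega>. q/2 \<le> tulap0_cdf m b (X k \<omega>) \<and> tulap0_cdf m b (X k \<omega>) \<le> 1 - q/2);
            N = (\<lambda>\<omega>. X (LEAST k. acc k \<omega>) \<omega>)
        in (AE \<omega> in M. \<exists>k. acc k \<omega>) \<and>
           (\<forall>x. cdf (distr M borel N) x = tulap_cdf m b q x)))
  \<and> (\<forall>(M :: 'b measure) (N :: 'b \<Rightarrow> real).
       prob_space M \<longrightarrow> N \<in> borel_measurable M \<longrightarrow>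
       (\<forall>x. cdf (distr M borel N) x = tulap_cdf m b q x) \<longrightarrow>
       (\<forall>x. isCont (cdf (distr M borel N)) x) \<and>
       distr M borel N = distr M borel (\<lambda>\<omega>. 2 * m - N \<omega>))"
proof -
  have b: "0 < b" "b < 1" and q: "0 \<le> q" "q < 1" using assms by auto
  have iid: "iid_trials M (trial_measure b) Z"
    if "prob_space M" "prob_space.indep_vars M (\<lambda>_. trial_measure b) Z UNIV"
      "\<forall>k. distr M (trial_measure b) (Z k) = trial_measure b" for M :: "'a measure" and Z
    using that by (simp add: iid_trials_def iid_trials_axioms_def)
  note sampler = tulap_rejection_sampler[OF b q iid, unfolded tulap_accept_def mem_Collect_eq]
  show ?thesis
    unfolding Let_def
    apply (intro conjI allI impI)
    subgoal using cdf_tulap0_measure[OF b] by (simp add: tulap0_measure_def)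
    subgoal using cdf_tulap0_measure[OF b] by (simp add: distr_trial_measure_eq_tulap0_measure[OF b])
    subgoal by (rule sampler(1))
    subgoal by (rule sampler(2))
    subgoal by (rule tulap_law_continuous_symmetric(1)[OF b q, where m=m]) auto
    subgoal by (rule tulap_law_continuous_symmetric(2)[OF b q, where m=m]) auto
    done
qed

end
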